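(* Let $q$ be a prime power, $m$ a positive integer, and $n=q^m-1$. Let $x,y$ be integers with $1\le x,y<q^{\lceil m/2\rceil}+1$, $x\not\equiv0\pmod q$, $y\not\equiv 0\pmod q$, and $x\ne y$. Then the $q$-ary cyclotomic cosets $C_x=\{xq^\ell\bmod n\mid\ell\in\mathbf{Z}\}$ and $C_y$ are distinct (hence disjoint). *)

theory Defs
  imports Complex_Main "HOL-Number_Theory.Prime_Powers"
begin

text \<open>The q-ary cyclotomic coset of x modulo n: the set of residues x q^l mod n.
  Exponents range over the naturals; since q^m = 1 mod n for n = q^m - 1, this is the
  same set as with integer exponents.\<close>
definition cyclotomic_coset :: "nat \<Rightarrow> int \<Rightarrow> int \<Rightarrow> int set" where
  "cyclotomic_coset q n x = {(x * int q ^ l) mod n | l::nat. True}"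

end

theory Submission
  imports Defs
begin

text \<open>Modulo \<open>n = q^m - 1\<close>, multiplying by \<open>q^l\<close> cyclically shifts the \<open>m\<close> base-\<open>q\<close> digits of
  a residue in \<open>[1, n]\<close> by \<open>l\<close> places, so each coset consists of the digit rotations of \<open>x\<close>.
  If \<open>x\<close> has at most \<open>\<lceil>m/2\<rceil>\<close> digits and last digit nonzero, a rotation by \<open>0 < l < \<lceil>m/2\<rceil>\<close>
  ends in the digit \<open>0\<close>, while a rotation by \<open>l \<ge> \<lceil>m/2\<rceil>\<close> moves a nonzero digit of \<open>x\<close> to
  position \<open>l\<close> and is therefore at least \<open>q^\<lceil>m/2\<rceil>\<close>. Neither can be a second such number \<open>y\<close>.\<close>

text \<open>For \<open>0 \<le> x < Q^m\<close> and \<open>l \<le> m\<close>: the cyclic shift by \<open>l\<close> places of the \<open>m\<close>-digit base-\<open>Q\<close>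
  expansion of \<open>x\<close>.\<close>
definition digit_rotate :: "int \<Rightarrow> nat \<Rightarrow> nat \<Rightarrow> int \<Rightarrow> int" where
  "digit_rotate Q m l x = (x mod Q ^ (m - l)) * Q ^ l + x div Q ^ (m - l)"

lemma mult_pow_eq_digit_rotate:
  fixes Q x :: int
  assumes "l \<le> m"
  shows "x * Q ^ l = digit_rotate Q m l x + (x div Q ^ (m - l)) * (Q ^ m - 1)"
proof -
  have "x * Q ^ l = (x mod Q ^ (m - l) + Q ^ (m - l) * (x div Q ^ (m - l))) * Q ^ l"
    by (simp only: mod_mult_div_eq)
  also have "\<dots> = x mod Q ^ (m - l) * Q ^ l + x div Q ^ (m - l) * (Q ^ (m - l) * Q ^ l)"
    by algebra
  also have "Q ^ (m - l) * Q ^ l = Q ^ m"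
    using assms by (simp add: power_add[symmetric])
  finally show ?thesis
    unfolding digit_rotate_def by (simp add: algebra_simps)
qed

lemma mult_pow_mod_eq_digit_rotate_mod:
  fixes Q x :: int
  assumes "l \<le> m"
  shows "x * Q ^ l mod (Q ^ m - 1) = digit_rotate Q m l x mod (Q ^ m - 1)"
  by (simp add: mult_pow_eq_digit_rotate[OF assms])

lemma digit_rotate_pos:
  fixes Q x :: int
  assumes "0 < Q" "0 < x"
  shows "0 < digit_rotate Q m l x"
proof -
  have "0 \<le> x mod Q ^ (m - l)" "0 \<le> x div Q ^ (m - l)"
    using assms by (simp_all add: pos_imp_zdiv_nonneg_iff)
  moreover have "x mod Q ^ (m - l) \<noteq> 0 \<or> x div Q ^ (m - l) \<noteq> 0"
    using assms(2) by (metis div_mult_mod_eq mult_zero_left add.right_neutral less_irrefl)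
  ultimately show ?thesis
    unfolding digit_rotate_def using assms(1)
    by (smt (verit) mult_nonneg_nonneg mult_pos_pos zero_less_power)
qed

lemma digit_rotate_le:
  fixes Q x :: int
  assumes "0 < Q" "l \<le> m" "0 \<le> x" "x < Q ^ m"
  shows "digit_rotate Q m l x \<le> Q ^ m - 1"
proof -
  have split: "Q ^ m = Q ^ (m - l) * Q ^ l"
    using assms(2) by (simp add: power_add[symmetric])
  have "x div Q ^ (m - l) * Q ^ (m - l) \<le> x"
    using assms(1) by (metis div_mult_mod_eq le_add_same_cancel1 pos_mod_sign zero_less_power)
  then have "x div Q ^ (m - l) * Q ^ (m - l) < Q ^ l * Q ^ (m - l)"
    using assms(4) split by (simp add: mult.commute)
  then have "x div Q ^ (m - l) < Q ^ l"
    using assms(1) by (simp add: mult_less_cancel_right)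
  moreover have "x mod Q ^ (m - l) * Q ^ l \<le> (Q ^ (m - l) - 1) * Q ^ l"
    using assms(1) by (intro mult_right_mono) auto
  ultimately show ?thesis
    unfolding digit_rotate_def split by (simp add: algebra_simps)
qed

lemma digit_rotate_eq_mult_pow:
  fixes Q x :: int
  assumes "0 \<le> x" "x < Q ^ (m - l)"
  shows "digit_rotate Q m l x = x * Q ^ l"
  using assms by (simp add: digit_rotate_def)

lemma pow_le_digit_rotate:
  fixes Q x :: int
  assumes "0 < Q" "0 \<le> x" "\<not> Q ^ (m - l) dvd x"
  shows "Q ^ l \<le> digit_rotate Q m l x"
proof -
  have "1 \<le> x mod Q ^ (m - l)"
    using assms by (metis dvd_eq_mod_eq_0 pos_mod_sign zero_less_power int_one_le_iff_zero_less
      order_le_less)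
  then have "Q ^ l \<le> x mod Q ^ (m - l) * Q ^ l"
    using assms(1) by simp
  moreover have "0 \<le> x div Q ^ (m - l)"
    using assms by (simp add: pos_imp_zdiv_nonneg_iff)
  ultimately show ?thesis
    unfolding digit_rotate_def by linarith
qed

lemma digit_rotate_of_short_eq_short_imp_eq:
  fixes Q x y :: int
  assumes "0 < Q" "2 * h \<le> m + 1" "l < m"
    and "0 < x" "x < Q ^ h" "y < Q ^ h"
    and "\<not> Q dvd x" "\<not> Q dvd y"
    and "y = digit_rotate Q m l x"
  shows "y = x"
proof (cases "l < h")
  case True
  then have "Q ^ h \<le> Q ^ (m - l)"
    using assms(1,2) by (intro power_increasing) auto
  then have y_eq: "y = x * Q ^ l"
    using assms(4,5,9) by (simp add: digit_rotate_eq_mult_pow)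
  show ?thesis
  proof (cases l)
    case (Suc k)
    then have "Q dvd y"
      using y_eq by simp
    with assms(8) show ?thesis ..
  qed (simp add: y_eq)
next
  case False
  have "\<not> Q ^ (m - l) dvd x"
    using assms(3,7) by (meson dvd_power dvd_trans zero_less_diff)
  then have "Q ^ l \<le> y"
    using assms(1,4,9) pow_le_digit_rotate by simp
  moreover have "Q ^ h \<le> Q ^ l"
    using False assms(1) by (intro power_increasing) auto
  ultimately show ?thesis
    using assms(6) by simp
qed

lemma pow_mod_pow_minus_one:
  fixes Q :: int
  shows "Q ^ l mod (Q ^ m - 1) = Q ^ (l mod m) mod (Q ^ m - 1)"
proof -
  have "Q ^ m mod (Q ^ m - 1) = 1 mod (Q ^ m - 1)"
    by (metis diff_add_cancel mod_add_self1)
  then have "Q ^ (m * (l div m)) mod (Q ^ m - 1) = 1 mod (Q ^ m - 1)"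
    by (metis power_mult power_mod power_one)
  then show ?thesis
    by (metis div_mult_mod_eq mod_mult_right_eq mult.commute mult.right_neutral power_add)
qed

lemma cyclotomic_coset_eq_exponents_less:
  assumes "0 < m"
  shows "cyclotomic_coset q (int q ^ m - 1) x = {x * int q ^ l mod (int q ^ m - 1) | l. l < m}"
    (is "_ = ?S")
proof
  show "cyclotomic_coset q (int q ^ m - 1) x \<subseteq> ?S"
  proof
    fix z
    assume "z \<in> cyclotomic_coset q (int q ^ m - 1) x"
    then obtain l where z: "z = x * int q ^ l mod (int q ^ m - 1)"
      unfolding cyclotomic_coset_def by blast
    also have "\<dots> = x * (int q ^ l mod (int q ^ m - 1)) mod (int q ^ m - 1)"
      by (simp add: mod_mult_right_eq)
    also have "\<dots> = x * (int q ^ (l mod m) mod (int q ^ m - 1)) mod (int q ^ m - 1)"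
      using pow_mod_pow_minus_one[of "int q" l m] by (rule arg_cong)
    also have "\<dots> = x * int q ^ (l mod m) mod (int q ^ m - 1)"
      by (simp add: mod_mult_right_eq)
    finally have "z = x * int q ^ (l mod m) mod (int q ^ m - 1)" .
    moreover have "l mod m < m"
      using assms by simp
    ultimately show "z \<in> ?S"
      by (intro CollectI exI[of _ "l mod m"] conjI)
  qed
qed (unfold cyclotomic_coset_def, blast)

lemma eq_if_mod_eq_Icc:
  fixes a b n :: int
  assumes "1 \<le> a" "a \<le> n" "1 \<le> b" "b \<le> n" "a mod n = b mod n"
  shows "a = b"
proof (rule ccontr)
  assume "a \<noteq> b"
  moreover have "n dvd a - b"
    using assms(5) by (simp add: mod_eq_dvd_iff)
  ultimately have "\<bar>n\<bar> \<le> \<bar>a - b\<bar>"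
    by (intro dvd_imp_le_int) auto
  with assms(1-4) show False
    by auto
qed

lemma mod_in_cyclotomic_coset_imp_digit_rotate:
  assumes "0 < q" "0 < m" "n = int q ^ m - 1"
    and "0 < x" "x < int q ^ m" "1 \<le> y" "y \<le> n"
    and "y mod n \<in> cyclotomic_coset q n x"
  obtains l where "l < m" "y = digit_rotate (int q) m l x"
proof -
  obtain l where l: "l < m" "y mod n = x * int q ^ l mod n"
    using assms(8) unfolding assms(3) cyclotomic_coset_eq_exponents_less[OF assms(2)] by blast
  then have "y mod n = digit_rotate (int q) m l x mod n"
    unfolding assms(3) by (simp add: mult_pow_mod_eq_digit_rotate_mod)
  moreover have "1 \<le> digit_rotate (int q) m l x"
    using digit_rotate_pos[of "int q" x m l] assms(1,4) by simp
  moreover have "digit_rotate (int q) m l x \<le> n"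
    using digit_rotate_le[of "int q" l m x] assms(1,3-5) l(1) by simp
  ultimately have "y = digit_rotate (int q) m l x"
    using eq_if_mod_eq_Icc assms(6,7) by blast
  with l(1) show ?thesis
    by (rule that)
qed

theorem mainTheorem5:
  fixes q m :: nat and x y n :: int
  assumes "primepow q" and "m > 0" and "n = int q ^ m - 1"
    and "1 \<le> x" and "x < int q ^ nat \<lceil>real m / 2\<rceil> + 1"
    and "1 \<le> y" and "y < int q ^ nat \<lceil>real m / 2\<rceil> + 1"
    and "x mod int q \<noteq> 0" and "y mod int q \<noteq> 0"
    and "x \<noteq> y"
  shows "cyclotomic_coset q n x \<noteq> cyclotomic_coset q n y"
proof
  assume cosets_eq: "cyclotomic_coset q n x = cyclotomic_coset q n y"
  define h where "h = nat \<lceil>real m / 2\<rceil>"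
  have q: "2 \<le> q"
    using assms(1) primepow_gt_Suc_0 by fastforce
  have h: "0 < h" "h \<le> m" "2 * h \<le> m + 1"
    unfolding h_def using assms(2) by linarith+
  have not_dvd: "\<not> int q dvd x" "\<not> int q dvd y"
    using assms(8,9) by auto
  moreover have "int q dvd int q ^ h"
    using h(1) by simp
  ultimately have short: "x < int q ^ h" "y < int q ^ h"
    using assms(5,7) unfolding h_def by (metis zle_add1_eq_le order_le_less)+
  moreover have "int q ^ h \<le> int q ^ m"
    using h(2) q by (intro power_increasing) auto
  ultimately have "x < int q ^ m" "y \<le> n"
    using assms(3) by simp_all
  moreover have "y mod n \<in> cyclotomic_coset q n x"
    using cosets_eq unfolding cyclotomic_coset_def by (auto intro: exI[of _ 0])
  ultimately obtain l where "l < m" "y = digit_rotate (int q) m l x"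
    using mod_in_cyclotomic_coset_imp_digit_rotate[of q m n x y] q assms(2-4,6) by auto
  then have "y = x"
    using digit_rotate_of_short_eq_short_imp_eq[of "int q" h m l x y] q h(3) short not_dvd
      assms(4) by simp
  with assms(10) show False
    by simp
qed

end
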